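(* Let $G=(X,\Sigma,\longrightarrow,X_0)$ and $R=(Z,\Sigma,\longrightarrow,Z_0)$ be automata. If $E$ is a $\Sigma_{ucr}$-controllability set from $G$ to $R$, then $\bigcup E$ is a $\Sigma_{ucr}$-simulation relation from $G$ to $R$.
   Context: An automaton is a 4-tuple $A=(Q,\Sigma,\longrightarrow,Q_0)$ with state set $Q$, finite event set $\Sigma$, ${\longrightarrow}\subseteq Q\times\Sigma\times Q$ and $\emptyset\neq Q_0\subseteq Q$; write $q\xrightarrow{\sigma}q'$ for $(q,\sigma,q')\in{\longrightarrow}$. Events are partitioned into uncontrollable $\Sigma_{uc}$ and controllable $\Sigma_c$; $\Sigma_r\subseteq\Sigma$ is a fixed set of required events. A relation $\Phi\subseteq X\times Z$ is a $\Sigma_{ucr}$-simulation from $G$ to $R$ if (initial state) every $x_0\in X_0$ has $z_0\in Z_0$ with $(x_0,z_0)\in\Phi$; ($\Sigma_{uc}$-forward) for $(x,z)\in\Phi$, $\sigma\in\Sigma_{uc}$, $x\xrightarrow{\sigma}x'$ there is $z'$ with $z\xrightarrow{\sigma}z'$ and $(x',z')\in\Phi$; ($\Sigma_r$-backward) for $(x,z)\in\Phi$, $\sigma\in\Sigma_r$, $z\xrightarrow{\sigma}z'$ there is $x'$ with $x\xrightarrow{\sigma}x'$ and $(x',z')\in\Phi$. For $W,W'\subseteq X\times Z$: $\mathit{match}_{G,R}(W,\sigma,W')$ iff for all $(x,z)\in W$ and $x\xrightarrow{\sigma}x'$ there is $z'$ with $z\xrightarrow{\sigma}z'$ and $(x',z')\in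 W'$. $E\subseteq\wp(X\times Z)$ is a $\Sigma_{ucr}$-controllability set from $G$ to $R$ if: (istate) some $W_0\in E$ satisfies $\forall x_0\in X_0\,\exists z_0\in Z_0\,((x_0,z_0)\in W_0)$; (a) for every $W\in E$, $\sigma\in\Sigma_{uc}$ there is $W'\in E$ with $\mathit{match}_{G,R}(W,\sigma,W')$; (b) for every $W\in E$, $(x,z)\in W$, $\sigma\in\Sigma_r$, $z\xrightarrow{\sigma}z'$, there exist $x'$, $W'\in E$ with $x\xrightarrow{\sigma}x'$, $(x',z')\in W'$, $\mathit{match}_{G,R}(W,\sigma,W')$. *)

theory Defs
  imports Main
begin

record ('q, 'e) automaton =
  states :: "'q set"
  events :: "'e set"
  trans  :: "('q \<times> 'e \<times> 'q) set"
  init   :: "'q set"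

definition is_automaton :: "('q, 'e) automaton \<Rightarrow> bool" where
  "is_automaton A \<longleftrightarrow> finite (events A)
     \<and> trans A \<subseteq> states A \<times> events A \<times> states A
     \<and> init A \<noteq> {} \<and> init A \<subseteq> states A"

abbreviation step :: "('q, 'e) automaton \<Rightarrow> 'q \<Rightarrow> 'e \<Rightarrow> 'q \<Rightarrow> bool" where
  "step A q \<sigma> q' \<equiv> (q, \<sigma>, q') \<in> trans A"

text \<open>Sigma_ucr-simulation from G to R; Uc = uncontrollable events, Sr = required events.\<close>
definition ucr_simulation ::
  "'e set \<Rightarrow> 'e set \<Rightarrow> ('x, 'e) automaton \<Rightarrow> ('z, 'e) automaton \<Rightarrow> ('x \<times> 'z) set \<Rightarrow> bool" where
  "ucr_simulation Uc Sr G R \<Phi> \<longleftrightarrow>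
     \<Phi> \<subseteq> states G \<times> states R
   \<and> (\<forall>x0\<in>init G. \<exists>z0\<in>init R. (x0, z0) \<in> \<Phi>)
   \<and> (\<forall>(x, z)\<in>\<Phi>. \<forall>\<sigma>\<in>Uc. \<forall>x'. step G x \<sigma> x' \<longrightarrow> (\<exists>z'. step R z \<sigma> z' \<and> (x', z') \<in> \<Phi>))
   \<and> (\<forall>(x, z)\<in>\<Phi>. \<forall>\<sigma>\<in>Sr. \<forall>z'. step R z \<sigma> z' \<longrightarrow> (\<exists>x'. step G x \<sigma> x' \<and> (x', z') \<in> \<Phi>))"

definition match ::
  "('x, 'e) automaton \<Rightarrow> ('z, 'e) automaton \<Rightarrow> ('x \<times> 'z) set \<Rightarrow> 'e \<Rightarrow> ('x \<times> 'z) set \<Rightarrow> bool" where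
  "match G R W \<sigma> W' \<longleftrightarrow>
     (\<forall>(x, z)\<in>W. \<forall>x'. step G x \<sigma> x' \<longrightarrow> (\<exists>z'. step R z \<sigma> z' \<and> (x', z') \<in> W'))"

definition ucr_controllability_set ::
  "'e set \<Rightarrow> 'e set \<Rightarrow> ('x, 'e) automaton \<Rightarrow> ('z, 'e) automaton \<Rightarrow> ('x \<times> 'z) set set \<Rightarrow> bool" where
  "ucr_controllability_set Uc Sr G R E \<longleftrightarrow>
     (\<forall>W\<in>E. W \<subseteq> states G \<times> states R)
   \<and> (\<exists>W0\<in>E. \<forall>x0\<in>init G. \<exists>z0\<in>init R. (x0, z0) \<in> W0)
   \<and> (\<forall>W\<in>E. \<forall>\<sigma>\<in>Uc. \<exists>W'\<in>E. match G R W \<sigma> W')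
   \<and> (\<forall>W\<in>E. \<forall>(x, z)\<in>W. \<forall>\<sigma>\<in>Sr. \<forall>z'. step R z \<sigma> z' \<longrightarrow>
        (\<exists>x'. \<exists>W'\<in>E. step G x \<sigma> x' \<and> (x', z') \<in> W' \<and> match G R W \<sigma> W'))"

end

theory Submission
  imports Defs
begin

text \<open>Each member of a controllability set already matches uncontrollable moves into some
  member of the set, so the union matches them into itself; required moves of R are answered
  inside some member, hence inside the union.\<close>

lemma match_Union:
  assumes "\<And>W. W \<in> E \<Longrightarrow> \<exists>W'\<in>E. match G R W \<sigma> W'"
  shows "match G R (\<Union>E) \<sigma> (\<Union>E)"
  unfolding match_def
proof clarify
  fix x z W x'
  assume "(x, z) \<in> W" "W \<in> E" "step G x \<sigma> x'"
  moreover obtain W' where "W' \<in> E" "match G R W \<sigma> W'"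
    using assms \<open>W \<in> E\<close> by blast
  ultimately show "\<exists>z'. step R z \<sigma> z' \<and> (x', z') \<in> \<Union>E"
    unfolding match_def by blast
qed

lemma ucr_simulation_iff_match:
  "ucr_simulation Uc Sr G R \<Phi> \<longleftrightarrow>
     \<Phi> \<subseteq> states G \<times> states R
   \<and> (\<forall>x0\<in>init G. \<exists>z0\<in>init R. (x0, z0) \<in> \<Phi>)
   \<and> (\<forall>\<sigma>\<in>Uc. match G R \<Phi> \<sigma> \<Phi>)
   \<and> (\<forall>(x, z)\<in>\<Phi>. \<forall>\<sigma>\<in>Sr. \<forall>z'. step R z \<sigma> z' \<longrightarrow> (\<exists>x'. step G x \<sigma> x' \<and> (x', z') \<in> \<Phi>))"
  unfolding ucr_simulation_def match_def by blast

lemma ucr_controllability_set_Union_simulation: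
  assumes "ucr_controllability_set Uc Sr G R E"
  shows "ucr_simulation Uc Sr G R (\<Union>E)"
proof -
  from assms have states: "\<forall>W\<in>E. W \<subseteq> states G \<times> states R"
    and initial: "\<exists>W0\<in>E. \<forall>x0\<in>init G. \<exists>z0\<in>init R. (x0, z0) \<in> W0"
    and uncontrollable: "\<forall>W\<in>E. \<forall>\<sigma>\<in>Uc. \<exists>W'\<in>E. match G R W \<sigma> W'"
    and required: "\<forall>W\<in>E. \<forall>(x, z)\<in>W. \<forall>\<sigma>\<in>Sr. \<forall>z'. step R z \<sigma> z' \<longrightarrow>
        (\<exists>x'. \<exists>W'\<in>E. step G x \<sigma> x' \<and> (x', z') \<in> W' \<and> match G R W \<sigma> W')"
    unfolding ucr_controllability_set_def by simp_all
  have "\<Union>E \<subseteq> states G \<times> states R"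
    using states by (intro Union_least) simp
  moreover have "\<forall>x0\<in>init G. \<exists>z0\<in>init R. (x0, z0) \<in> \<Union>E"
    using initial by blast
  moreover have "\<forall>\<sigma>\<in>Uc. match G R (\<Union>E) \<sigma> (\<Union>E)"
    using uncontrollable by (intro ballI match_Union) simp
  moreover have "\<forall>(x, z)\<in>\<Union>E. \<forall>\<sigma>\<in>Sr. \<forall>z'. step R z \<sigma> z' \<longrightarrow> (\<exists>x'. step G x \<sigma> x' \<and> (x', z') \<in> \<Union>E)"
  proof clarify
    fix x z W \<sigma> z'
    assume "(x, z) \<in> W" "W \<in> E" "\<sigma> \<in> Sr" "step R z \<sigma> z'"
    with required obtain x' W' where "W' \<in> E" "step G x \<sigma> x'" "(x', z') \<in> W'"
      by fast
    then show "\<exists>x'. step G x \<sigma> x' \<and> (x', z') \<in> \<Union>E" by blast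
  qed
  ultimately show ?thesis
    unfolding ucr_simulation_iff_match by blast
qed

theorem mainTheorem7:
  fixes G :: "('x, 'e) automaton" and R :: "('z, 'e) automaton"
    and Uc Sr :: "'e set" and E :: "('x \<times> 'z) set set"
  assumes "is_automaton G" and "is_automaton R"
    and "events G = events R"
    and "Uc \<subseteq> events G" and "Sr \<subseteq> events G"
    and "ucr_controllability_set Uc Sr G R E"
  shows "ucr_simulation Uc Sr G R (\<Union> E)"
  using assms(6) by (rule ucr_controllability_set_Union_simulation)

end
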